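(* Let $n\ge1$. Let $|\Psi\rangle=\frac{1}{\sqrt2}(|01\rangle+|10\rangle)$ on a pair of qubits (first qubit Bob's, second Charlie's). For $x\in\{0,1\}^n$ define the $2n$-qubit state $|\tilde x\rangle=\bigotimes_{i=1}^n|\tilde x_i\rangle$, where $|\tilde x_i\rangle=|00\rangle$ if $x_i=0$ and $|\tilde x_i\rangle=|\Psi\rangle$ if $x_i=1$, the $i$-th pair consisting of Bob's $i$-th qubit and Charlie's $i$-th qubit. Let $A$ be any operator on Bob's $n$ qubits, and write $|x\rangle$ for Bob's computational basis state labeled by $x$. Then: (i) For $x,y\in\{0,1\}^n$, let $S=\{b\in\{0,1\}^n: b_i=0 \text{ whenever } x_iy_i\ne1\}$. Then $\langle\tilde x|A\otimes\mathbb I|\tilde y\rangle=c_{x,y}\sum_{b\in S}\langle x+b|A|y+b\rangle$ for a nonzero constant $c_{x,y}$ independent of $A$ (addition mod 2 componentwise). (ii) If $\langle\tilde x|A\otimes\mathbb I|\tilde y\rangle=0$ for all $x\ne y\in\{0,1\}^n$, then $\langle x|A|y\rangle=0$ for all $x\neq y\in\{0,1\}^n$. (iii) If $\langle\tilde x|A\otimes\mathbb I|\tilde x\rangle=k$ for all $x\in\{0,1\}^n$, then $\langle x|A|x\rangle=k$ for all $x\in\{0,1\}^n$.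
   Context: $\mathbb I$ denotes the identity on Charlie's $n$ qubits. For binary strings, $x+b$ denotes componentwise addition modulo 2. *)

theory Defs
  imports Complex_Main
begin

text \<open>Bit strings in {0,1}^n are boolean lists of length n (False = 0, True = 1).
 Entry i of a list is the i-th qubit.\<close>

definition bitstrings :: "nat \<Rightarrow> bool list set" where
  "bitstrings n = {xs. length xs = n}"

definition xor_bits :: "bool list \<Rightarrow> bool list \<Rightarrow> bool list" where
  "xor_bits x b = map2 (\<lambda>p q. p \<noteq> q) x b"

text \<open>Amplitude of |Psi> = (|01> + |10>)/sqrt 2 at basis state |b c>
  (b = Bob's qubit, c = Charlie's qubit).\<close>
definition Psi_amp :: "bool \<Rightarrow> bool \<Rightarrow> complex" where
  "Psi_amp b c = (if b \<noteq> c then complex_of_real (1 / sqrt 2) else 0)"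

definition pair_amp :: "bool \<Rightarrow> bool \<Rightarrow> bool \<Rightarrow> complex" where
  "pair_amp xi b c = (if xi then Psi_amp b c else (if \<not> b \<and> \<not> c then 1 else 0))"

text \<open>Amplitude of the 2n-qubit state |x~> = tensor of the |x_i~> at the basis state
  where Bob's n qubits are u and Charlie's n qubits are w (the i-th pair is (u_i, w_i)).\<close>
definition tilde_amp :: "bool list \<Rightarrow> bool list \<Rightarrow> bool list \<Rightarrow> complex" where
  "tilde_amp x u w = (\<Prod>i<length x. pair_amp (x ! i) (u ! i) (w ! i))"

text \<open>An operator A on Bob's n qubits is given by its matrix entries A u v = <u|A|v>
  in the computational basis (u, v in {0,1}^n).
  tilde_elem n A x y = <x~| A \<otimes> I |y~>, where (A \<otimes> I) has entries
  <u,w| A\<otimes>I |v,w'> = A u v * [w = w'].\<close>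
definition tilde_elem ::
  "nat \<Rightarrow> (bool list \<Rightarrow> bool list \<Rightarrow> complex) \<Rightarrow> bool list \<Rightarrow> bool list \<Rightarrow> complex" where
  "tilde_elem n A x y =
     (\<Sum>u\<in>bitstrings n. \<Sum>v\<in>bitstrings n. \<Sum>w\<in>bitstrings n.
        cnj (tilde_amp x u w) * A u v * tilde_amp y v w)"

end

theory Submission
  imports Defs
begin

text \<open>
  Each pair state |x_i~> has exactly one nonzero amplitude once Charlie's bit
  w_i is fixed: Bob's bit must be x_i + w_i, and w_i = 1 is only possible when x_i = 1.
  Hence the amplitude of |x~> at (u, w) is the constant weight 2^(-|x|/2) if u = x + w and
  w is dominated by x, and 0 otherwise.  Summing out Bob's indices u, v leaves only the
  Charlie strings b dominated by both x and y, which gives part (i) with c = 2^(-(|x|+|y|)/2).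

  Parts (ii) and (iii) are both instances of one vanishing lemma: if a relation R between
  bit strings is preserved by adding the same b to both arguments and all tilde elements of
  A vanish on R, then so do the entries of A.  Its proof is a strong induction on the size
  of the overlap {i. x_i = y_i = 1}: the b = 0 term of formula (i) is A x y, and every other
  term has strictly smaller overlap.  Part (iii) applies it with R = (=) to A - k I, using
  that the states |x~> are normalised.
\<close>

lemma finite_bitstrings: "finite (bitstrings n)"
  using finite_lists_length_eq[of "UNIV :: bool set" n] by (simp add: bitstrings_def)

lemma length_xor_bits [simp]: "length (xor_bits x b) = min (length x) (length b)"
  by (simp add: xor_bits_def)

lemma nth_xor_bits [simp]:
  "i < length x \<Longrightarrow> i < length b \<Longrightarrow> xor_bits x b ! i = (x ! i \<noteq> b ! i)"
  by (simp add: xor_bits_def)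

definition tilde_weight :: "nat \<Rightarrow> bool list \<Rightarrow> complex" where
  "tilde_weight n x = complex_of_real ((1 / sqrt 2) ^ card {i. i < n \<and> x ! i})"

definition below :: "nat \<Rightarrow> bool list \<Rightarrow> bool list \<Rightarrow> bool" where
  "below n w x \<longleftrightarrow> (\<forall>i<n. w ! i \<longrightarrow> x ! i)"

lemma cnj_tilde_weight [simp]: "cnj (tilde_weight n x) = tilde_weight n x"
  by (simp add: tilde_weight_def)

lemma tilde_weight_nonzero: "tilde_weight n x \<noteq> 0"
  by (simp add: tilde_weight_def)

lemma pair_amp_eq:
  "pair_amp a p q = (if p = (a \<noteq> q) \<and> (q \<longrightarrow> a) then (if a then complex_of_real (1 / sqrt 2) else 1) else 0)"
  by (auto simp: pair_amp_def Psi_amp_def)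

lemma tilde_amp_eq:
  assumes "length x = n" "length u = n" "length w = n"
  shows "tilde_amp x u w = (if u = xor_bits x w \<and> below n w x then tilde_weight n x else 0)"
proof (cases "u = xor_bits x w \<and> below n w x")
  case True
  then have "tilde_amp x u w = (\<Prod>i<n. if x ! i then complex_of_real (1 / sqrt 2) else 1)"
    using assms unfolding tilde_amp_def by (intro prod.cong) (auto simp: pair_amp_eq below_def)
  also have "\<dots> = (\<Prod>i\<in>{i. i < n \<and> x ! i}. complex_of_real (1 / sqrt 2))"
    by (simp add: prod.If_cases Int_def conj_commute)
  finally show ?thesis using True by (simp add: tilde_weight_def)
next
  case False
  then obtain i where "i < n" "pair_amp (x ! i) (u ! i) (w ! i) = 0"
  proof -
    have "\<exists>i<n. \<not> (u ! i = (x ! i \<noteq> w ! i) \<and> (w ! i \<longrightarrow> x ! i))"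
      using False assms by (auto simp: below_def list_eq_iff_nth_eq)
    then show ?thesis using that unfolding pair_amp_eq by (metis (full_types))
  qed
  then show ?thesis using False assms by (auto simp: tilde_amp_def prod_zero_iff)
qed

definition flip_set :: "nat \<Rightarrow> bool list \<Rightarrow> bool list \<Rightarrow> bool list set" where
  "flip_set n x y = {b \<in> bitstrings n. \<forall>i<n. \<not> (x ! i \<and> y ! i) \<longrightarrow> \<not> b ! i}"

lemma flip_set_eq: "flip_set n x y = {b \<in> bitstrings n. below n b x \<and> below n b y}"
  by (auto simp: flip_set_def below_def)

lemma xor_bits_in_bitstrings:
  "x \<in> bitstrings n \<Longrightarrow> b \<in> bitstrings n \<Longrightarrow> xor_bits x b \<in> bitstrings n"
  by (simp add: bitstrings_def)

text \<open>Part (i): for fixed Charlie string w only u = x + w and v = y + w contribute, and only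
  when w is dominated by both x and y.\<close>
lemma tilde_elem_formula:
  assumes x: "x \<in> bitstrings n" and y: "y \<in> bitstrings n"
  shows "tilde_elem n A x y =
           tilde_weight n x * tilde_weight n y * (\<Sum>b\<in>flip_set n x y. A (xor_bits x b) (xor_bits y b))"
proof -
  let ?B = "bitstrings n"
  let ?f = "\<lambda>u v w. cnj (tilde_amp x u w) * A u v * tilde_amp y v w"
  let ?g = "\<lambda>w. if below n w x \<and> below n w y
                  then tilde_weight n x * tilde_weight n y * A (xor_bits x w) (xor_bits y w) else 0"
  have collapse: "(\<Sum>u\<in>?B. \<Sum>v\<in>?B. ?f u v w) = ?g w" if w: "w \<in> ?B" for w
  proof -
    have pointwise: "?f u v w = (if u = xor_bits x w then if v = xor_bits y w then ?g w else 0 else 0)"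
      if "u \<in> ?B" "v \<in> ?B" for u v
      using x y w that by (simp add: tilde_amp_eq bitstrings_def)
    have "(\<Sum>u\<in>?B. \<Sum>v\<in>?B. ?f u v w)
        = (\<Sum>u\<in>?B. if u = xor_bits x w then \<Sum>v\<in>?B. if v = xor_bits y w then ?g w else 0 else 0)"
      by (intro sum.cong refl) (simp add: pointwise cong: if_cong)
    also have "\<dots> = ?g w"
      using x y w by (simp add: sum.delta finite_bitstrings xor_bits_in_bitstrings)
    finally show ?thesis .
  qed
  have "tilde_elem n A x y = (\<Sum>w\<in>?B. \<Sum>u\<in>?B. \<Sum>v\<in>?B. ?f u v w)"
    unfolding tilde_elem_def by (subst sum.swap, subst (2) sum.swap) (rule refl)
  also have "\<dots> = (\<Sum>w\<in>?B. ?g w)"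
    by (rule sum.cong) (simp_all add: collapse)
  also have "\<dots> = (\<Sum>w\<in>flip_set n x y. tilde_weight n x * tilde_weight n y * A (xor_bits x w) (xor_bits y w))"
    by (simp add: sum.inter_filter[symmetric] finite_bitstrings flip_set_eq)
  finally show ?thesis by (simp add: sum_distrib_left)
qed

lemma tilde_elem_proportional:
  "\<forall>x\<in>bitstrings n. \<forall>y\<in>bitstrings n. \<exists>c::complex. c \<noteq> 0 \<and>
     (\<forall>A. tilde_elem n A x y = c * (\<Sum>b\<in>flip_set n x y. A (xor_bits x b) (xor_bits y b)))"
  using tilde_elem_formula tilde_weight_nonzero by (metis mult_eq_0_iff)

definition overlap :: "nat \<Rightarrow> bool list \<Rightarrow> bool list \<Rightarrow> nat set" where
  "overlap n x y = {i. i < n \<and> x ! i \<and> y ! i}"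

lemma zero_in_flip_set: "replicate n False \<in> flip_set n x y"
  by (simp add: flip_set_def bitstrings_def)

lemma xor_bits_zero: "length x = n \<Longrightarrow> xor_bits x (replicate n False) = x"
  by (rule nth_equalityI) auto

text \<open>Flipping a nonzero string b in S switches off some position of the overlap and
  switches none on, so the overlap strictly shrinks.\<close>
lemma overlap_decreases:
  assumes x: "x \<in> bitstrings n" and y: "y \<in> bitstrings n"
    and b: "b \<in> flip_set n x y" and nonzero: "b \<noteq> replicate n False"
  shows "card (overlap n (xor_bits x b) (xor_bits y b)) < card (overlap n x y)"
proof -
  have len: "length x = n" "length y = n" "length b = n"
    using x y b by (auto simp: bitstrings_def flip_set_def)
  have inside: "b ! j \<Longrightarrow> x ! j \<and> y ! j" if "j < n" for j
    using b that by (auto simp: flip_set_def)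
  have "\<exists>i<n. b ! i"
  proof (rule ccontr)
    assume "\<not> (\<exists>i<n. b ! i)"
    then have "b = replicate n False"
      using len(3) by (intro nth_equalityI) auto
    then show False using nonzero by contradiction
  qed
  then obtain i where i: "i < n" "b ! i" by blast
  have i_overlap: "i \<in> overlap n x y"
    using i inside by (simp add: overlap_def)
  have "overlap n (xor_bits x b) (xor_bits y b) \<subseteq> overlap n x y - {i}"
  proof
    fix j assume "j \<in> overlap n (xor_bits x b) (xor_bits y b)"
    then have "j < n" "xor_bits x b ! j" "xor_bits y b ! j"
      by (simp_all add: overlap_def)
    then have j: "j < n" "x ! j \<noteq> b ! j" "y ! j \<noteq> b ! j"
      using len by simp_all
    then show "j \<in> overlap n x y - {i}"
      using i inside[OF j(1)] by (auto simp: overlap_def)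
  qed
  then have "card (overlap n (xor_bits x b) (xor_bits y b)) \<le> card (overlap n x y - {i})"
    by (intro card_mono) (simp_all add: overlap_def)
  also have "\<dots> < card (overlap n x y)"
    using i_overlap by (intro card_Diff1_less) (simp_all add: overlap_def)
  finally show ?thesis .
qed

lemma sum_flip_set_split:
  assumes "length x = n" "length y = n"
  shows "(\<Sum>b\<in>flip_set n x y. A (xor_bits x b) (xor_bits y b))
           = A x y + (\<Sum>b\<in>flip_set n x y - {replicate n False}. A (xor_bits x b) (xor_bits y b))"
proof -
  have "finite (flip_set n x y)"
    using finite_bitstrings by (simp add: flip_set_def)
  then show ?thesis
    using assms by (simp add: sum.remove[OF _ zero_in_flip_set] xor_bits_zero)
qed

lemma entries_vanish:
  assumes R_xor: "\<And>x y b. x \<in> bitstrings n \<Longrightarrow> y \<in> bitstrings n \<Longrightarrow> b \<in> bitstrings n \<Longrightarrow>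
                      R x y \<Longrightarrow> R (xor_bits x b) (xor_bits y b)"
    and vanish: "\<And>x y. x \<in> bitstrings n \<Longrightarrow> y \<in> bitstrings n \<Longrightarrow> R x y \<Longrightarrow> tilde_elem n A x y = 0"
    and x: "x \<in> bitstrings n" and y: "y \<in> bitstrings n" and "R x y"
  shows "A x y = 0"
  using x y \<open>R x y\<close>
proof (induction "card (overlap n x y)" arbitrary: x y rule: less_induct)
  case less
  let ?z = "replicate n False"
  have smaller: "A (xor_bits x b) (xor_bits y b) = 0" if b: "b \<in> flip_set n x y - {?z}" for b
  proof -
    have "b \<in> bitstrings n" using b by (simp add: flip_set_def)
    then show ?thesis
      using less.hyps[OF overlap_decreases] b less.prems R_xor xor_bits_in_bitstrings by blast
  qed
  have "0 = (\<Sum>b\<in>flip_set n x y. A (xor_bits x b) (xor_bits y b))"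
    using vanish[OF less.prems] tilde_elem_formula[OF less.prems(1,2)] tilde_weight_nonzero by simp
  also have "\<dots> = A x y"
    using less.prems smaller by (simp add: sum_flip_set_split bitstrings_def)
  finally show ?case by simp
qed

text \<open>S is in bijection with the subsets of the overlap, via supports and indicator strings.\<close>
lemma card_flip_set: "card (flip_set n x y) = 2 ^ card (overlap n x y)"
proof -
  let ?support = "\<lambda>b. {i. i < n \<and> b ! i}"
  let ?indicator = "\<lambda>I. map (\<lambda>i. i \<in> I) [0..<n]"
  have "bij_betw ?support (flip_set n x y) (Pow (overlap n x y))"
  proof (rule bij_betw_byWitness[where f' = ?indicator])
    show "\<forall>b\<in>flip_set n x y. ?indicator (?support b) = b"
      by (auto simp: flip_set_def bitstrings_def intro: nth_equalityI)
    show "\<forall>I\<in>Pow (overlap n x y). ?support (?indicator I) = I"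
      by (auto simp: overlap_def)
    show "?support ` flip_set n x y \<subseteq> Pow (overlap n x y)"
      by (auto simp: flip_set_def overlap_def)
    show "?indicator ` Pow (overlap n x y) \<subseteq> flip_set n x y"
      by (auto simp: flip_set_def overlap_def bitstrings_def)
  qed
  then have "card (flip_set n x y) = card (Pow (overlap n x y))"
    by (rule bij_betw_same_card)
  then show ?thesis
    by (simp add: card_Pow overlap_def)
qed

text \<open>Normalisation of |x~>: S has 2^|x| elements for y = x, each contributing 2^(-|x|).\<close>
lemma tilde_normalized: "tilde_weight n x * tilde_weight n x * of_nat (card (flip_set n x x)) = 1"
proof -
  let ?r = "1 / complex_of_real (sqrt 2)"
  have "?r * ?r * 2 = 1"
    by (simp flip: of_real_mult)
  then have "?r ^ m * ?r ^ m * 2 ^ m = 1" for m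
    by (simp flip: power_mult_distrib)
  then show ?thesis
    by (simp add: tilde_weight_def card_flip_set overlap_def)
qed

lemma xor_bits_cancel:
  assumes "length x = length b" "length y = length b" "xor_bits x b = xor_bits y b"
  shows "x = y"
proof (rule nth_equalityI)
  show "length x = length y" using assms by simp
  fix i assume "i < length x"
  then have "xor_bits x b ! i = xor_bits y b ! i"
    using assms by simp
  then show "x ! i = y ! i"
    using \<open>i < length x\<close> assms(1,2) by auto
qed

text \<open>Since |x~> is normalised, subtracting k I from A subtracts k from the diagonal
  tilde elements.\<close>
lemma tilde_elem_diag_shift:
  assumes x: "x \<in> bitstrings n"
  shows "tilde_elem n (\<lambda>u v. A u v - (if u = v then k else 0)) x x = tilde_elem n A x x - k"
proof -
  let ?w = "tilde_weight n x * tilde_weight n x"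
  have "tilde_elem n (\<lambda>u v. A u v - (if u = v then k else 0)) x x
          = ?w * ((\<Sum>b\<in>flip_set n x x. A (xor_bits x b) (xor_bits x b)) - of_nat (card (flip_set n x x)) * k)"
    by (simp add: tilde_elem_formula[OF x x] sum_subtractf)
  also have "\<dots> = tilde_elem n A x x - (?w * of_nat (card (flip_set n x x))) * k"
    by (simp add: tilde_elem_formula[OF x x] algebra_simps)
  finally show ?thesis
    by (simp add: tilde_normalized)
qed

lemma offdiag_from_tilde:
  assumes vanish: "\<forall>x\<in>bitstrings n. \<forall>y\<in>bitstrings n. x \<noteq> y \<longrightarrow> tilde_elem n A x y = 0"
  shows "\<forall>x\<in>bitstrings n. \<forall>y\<in>bitstrings n. x \<noteq> y \<longrightarrow> A x y = 0"
proof (intro ballI impI)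
  fix x y assume x: "x \<in> bitstrings n" and y: "y \<in> bitstrings n" and "x \<noteq> y"
  have preserved: "xor_bits x' b \<noteq> xor_bits y' b"
    if "x' \<in> bitstrings n" "y' \<in> bitstrings n" "b \<in> bitstrings n" "x' \<noteq> y'" for x' y' b
    using that xor_bits_cancel[of x' b y'] by (auto simp: bitstrings_def)
  show "A x y = 0"
    by (rule entries_vanish[where R = "(\<noteq>)", OF preserved _ x y \<open>x \<noteq> y\<close>])
      (use vanish in auto)
qed

lemma diag_from_tilde:
  assumes diag: "\<forall>x\<in>bitstrings n. tilde_elem n A x x = k"
  shows "\<forall>x\<in>bitstrings n. A x x = k"
proof
  fix x assume x: "x \<in> bitstrings n"
  let ?B = "\<lambda>u v. A u v - (if u = v then k else 0)"
  have shifted_vanish: "tilde_elem n ?B z z' = 0"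
    if "z \<in> bitstrings n" "z' \<in> bitstrings n" "z = z'" for z z'
    using that diag by (simp add: tilde_elem_diag_shift)
  have "?B x x = 0"
    by (rule entries_vanish[where R = "(=)", OF _ shifted_vanish x x refl]) auto
  then show "A x x = k" by simp
qed

text \<open>The main theorem collects parts (i)-(iii).\<close>
theorem lemma2:
  fixes n :: nat
  assumes "n \<ge> 1"
  shows
   "(\<forall>x\<in>bitstrings n. \<forall>y\<in>bitstrings n.
       \<exists>c::complex. c \<noteq> 0 \<and>
         (\<forall>A :: bool list \<Rightarrow> bool list \<Rightarrow> complex.
            tilde_elem n A x y =
              c * (\<Sum>b\<in>{b\<in>bitstrings n. \<forall>i<n. \<not> (x ! i \<and> y ! i) \<longrightarrow> \<not> b ! i}.
                      A (xor_bits x b) (xor_bits y b))))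
    \<and> (\<forall>A :: bool list \<Rightarrow> bool list \<Rightarrow> complex.
         (\<forall>x\<in>bitstrings n. \<forall>y\<in>bitstrings n. x \<noteq> y \<longrightarrow> tilde_elem n A x y = 0) \<longrightarrow>
         (\<forall>x\<in>bitstrings n. \<forall>y\<in>bitstrings n. x \<noteq> y \<longrightarrow> A x y = 0))
    \<and> (\<forall>(A :: bool list \<Rightarrow> bool list \<Rightarrow> complex) (k::complex).
         (\<forall>x\<in>bitstrings n. tilde_elem n A x x = k) \<longrightarrow>
         (\<forall>x\<in>bitstrings n. A x x = k))"
  by (intro conjI allI impI tilde_elem_proportional[unfolded flip_set_def])
    (erule offdiag_from_tilde diag_from_tilde)+

end
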